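(* Let $(A,m)$ be a strict $A_\infty$-algebra over a field $\mathbf{F}$, let $\lambda\in\mathbf{F}$ with $\lambda\neq0$ and $a,b\in\mathbf{Z}$, and let $\tilde m_k=\lambda^{ak+b}m_k$ for $k\ge1$. Then there is an $A_\infty$ quasi-isomorphism $(A,\tilde m)\to(A,m)$.
   Context: A strict $A_\infty$-algebra $(A,m)$ over $\mathbf{F}$ is a $\mathbf{Z}$-graded vector space $A=\bigoplus_kA^k$ with graded linear maps $m_n:A^{\otimes n}\to A$ ($n\ge1$) of degree $2-n$ satisfying $\sum_{n=r+s+t}(-1)^{rs+t}m_{r+1+t}(\mathbf{I}^{\otimes r}\otimes m_s\otimes\mathbf{I}^{\otimes t})=0$ for all $n\ge1$ ($r,t\ge0,s\ge1$), with the Koszul sign rule $(f\otimes g)(x\otimes y)=(-1)^{|g||x|}f(x)\otimes g(y)$; $(A,\tilde m)$ is again such an algebra. A homomorphism $f:(A,m^A)\to(B,m^B)$ of strict $A_\infty$-algebras is a family of graded maps $f_n:A^{\otimes n}\to B$ ($n\ge1$) of degree $1-n$ with $\sum_{n=r+s+t}(-1)^{rs+t}f_{r+1+t}(\mathbf{I}^{\otimes r}\otimes m^A_s\otimes\mathbf{I}^{\otimes t})=\sum_{n=i_1+\dots+i_k}(-1)^{\sigma}m^B_k(f_{i_k}\otimes\cdots\otimes f_{i_1})$, where $\sigma=(k-1)(i_1-1)+(k-2)(i_2-1)+\dots+2(i_{k-2}-1)+(i_{k-1}-1)$. It is a quasi-isomorphism if $f_1$ induces an isomorphism $H^*(A,m^A_1)\to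 H^*(B,m^B_1)$. *)

theory Defs
  imports Complex_Main
begin

definition ksign :: "int \<Rightarrow> 'f::field" where
  "ksign k = (if even k then 1 else - 1)"

text \<open>A Z-graded vector space over the field 'f, realised internally: the ambient
  vector space is the type 'v with scalar multiplication scale, and Gr k is the
  homogeneous component of degree k.\<close>
definition graded_vs :: "('f::field \<Rightarrow> 'v::ab_group_add \<Rightarrow> 'v) \<Rightarrow> (int \<Rightarrow> 'v set) \<Rightarrow> bool" where
  "graded_vs scale Gr \<longleftrightarrow>
     vector_space scale \<and>
     (\<forall>k. module.subspace scale (Gr k)) \<and>
     (\<forall>v. \<exists>!c :: int \<Rightarrow> 'v. finite {k. c k \<noteq> 0} \<and> (\<forall>k. c k \<in> Gr k)
            \<and> v = (\<Sum>k\<in>{k. c k \<noteq> 0}. c k))"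

definition homog :: "(int \<Rightarrow> 'v set) \<Rightarrow> 'v list \<Rightarrow> int list \<Rightarrow> bool" where
  "homog Gr xs ds \<longleftrightarrow> length xs = length ds \<and> (\<forall>i<length xs. xs ! i \<in> Gr (ds ! i))"

text \<open>A graded linear map A^{\<otimes>n} \<rightarrow> B of degree d, represented (via the universal
  property of the tensor product) as an n-multilinear map on lists of length n.\<close>
definition graded_multilinear ::
  "('f::field \<Rightarrow> 'v::ab_group_add \<Rightarrow> 'v) \<Rightarrow> (int \<Rightarrow> 'v set) \<Rightarrow>
   ('f \<Rightarrow> 'w::ab_group_add \<Rightarrow> 'w) \<Rightarrow> (int \<Rightarrow> 'w set) \<Rightarrow> nat \<Rightarrow> int \<Rightarrow> ('v list \<Rightarrow> 'w) \<Rightarrow> bool" where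
  "graded_multilinear sA GA sB GB n d g \<longleftrightarrow>
     (\<forall>xs i. length xs = n \<longrightarrow> i < n \<longrightarrow> Vector_Spaces.linear sA sB (\<lambda>y. g (xs[i := y]))) \<and>
     (\<forall>xs ds. length xs = n \<longrightarrow> homog GA xs ds \<longrightarrow> g xs \<in> GB (sum_list ds + d))"

text \<open>Strict A-infinity algebra: m n :: A^{\<otimes>n} \<rightarrow> A of degree 2-n, satisfying
  sum_{r+s+t=n, s\<ge>1} (-1)^{rs+t} m_{r+1+t}(I^r \<otimes> m_s \<otimes> I^t) = 0,
  evaluated on homogeneous tensors x_1 \<otimes> ... \<otimes> x_n with the Koszul sign
  (-1)^{|m_s| (|x_1|+...+|x_r|)}.\<close>
definition ainf_lhs_term ::
  "('f::field \<Rightarrow> 'v::ab_group_add \<Rightarrow> 'v) \<Rightarrow> (nat \<Rightarrow> 'v list \<Rightarrow> 'w::ab_group_add) \<Rightarrow>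
   ('f \<Rightarrow> 'w \<Rightarrow> 'w) \<Rightarrow> (nat \<Rightarrow> 'v list \<Rightarrow> 'v) \<Rightarrow> 'v list \<Rightarrow> int list \<Rightarrow> 'w" where
  "ainf_lhs_term sA F sB m xs ds =
     (let n = length xs in
      \<Sum>r\<in>{0..n}. \<Sum>s\<in>{1..n - r}.
        (let t = n - r - s in
         sB (ksign (int r * int s + int t) * ksign ((2 - int s) * sum_list (take r ds)))
            (F (r + 1 + t) (take r xs @ [m s (take s (drop r xs))] @ drop (r + s) xs))))"

definition ainf_algebra ::
  "('f::field \<Rightarrow> 'v::ab_group_add \<Rightarrow> 'v) \<Rightarrow> (int \<Rightarrow> 'v set) \<Rightarrow> (nat \<Rightarrow> 'v list \<Rightarrow> 'v) \<Rightarrow> bool" where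
  "ainf_algebra scale Gr m \<longleftrightarrow>
     graded_vs scale Gr \<and>
     (\<forall>n\<ge>1. graded_multilinear scale Gr scale Gr n (2 - int n) (m n)) \<and>
     (\<forall>n\<ge>1. \<forall>xs ds. length xs = n \<longrightarrow> homog Gr xs ds \<longrightarrow>
        ainf_lhs_term scale m scale m xs ds = 0)"

fun blocks :: "nat list \<Rightarrow> 'a list \<Rightarrow> 'a list list" where
  "blocks [] xs = []"
| "blocks (c # cs) xs = take c xs # blocks cs (drop c xs)"

text \<open>Compositions n = i_1 + ... + i_k (k \<ge> 1, all i_j \<ge> 1). We store the list
  cs = [i_k, ..., i_1] of block sizes in the order in which the blocks of inputs
  are consumed, so that cs ! l = i_{k-l} and
  sigma = (k-1)(i_1-1) + ... + 1 (i_{k-1}-1) = sum_{l<k} l (cs!l - 1).\<close>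
definition compositions :: "nat \<Rightarrow> nat list set" where
  "compositions n = {cs. cs \<noteq> [] \<and> (\<forall>c\<in>set cs. 1 \<le> c) \<and> sum_list cs = n}"

definition hom_sigma :: "nat list \<Rightarrow> int" where
  "hom_sigma cs = (\<Sum>l<length cs. int l * (int (cs ! l) - 1))"

text \<open>Koszul sign of (f_{i_k} \<otimes> ... \<otimes> f_{i_1}) applied to homogeneous x_1 \<otimes> ... \<otimes> x_n:
  each factor (of degree 1 - i) passes the inputs of all earlier blocks.\<close>
definition hom_koszul :: "nat list \<Rightarrow> int list \<Rightarrow> int" where
  "hom_koszul cs ds = (\<Sum>l<length cs. (1 - int (cs ! l)) * sum_list (take (sum_list (take l cs)) ds))"

definition hom_rhs ::
  "('f::field \<Rightarrow> 'w::ab_group_add \<Rightarrow> 'w) \<Rightarrow> (nat \<Rightarrow> 'w list \<Rightarrow> 'w) \<Rightarrow>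
   (nat \<Rightarrow> 'v list \<Rightarrow> 'w) \<Rightarrow> 'v list \<Rightarrow> int list \<Rightarrow> 'w" where
  "hom_rhs sB mB f xs ds =
     (\<Sum>cs\<in>compositions (length xs).
        sB (ksign (hom_sigma cs) * ksign (hom_koszul cs ds))
           (mB (length cs) (map2 f cs (blocks cs xs))))"

definition ainf_hom ::
  "('f::field \<Rightarrow> 'v::ab_group_add \<Rightarrow> 'v) \<Rightarrow> (int \<Rightarrow> 'v set) \<Rightarrow> (nat \<Rightarrow> 'v list \<Rightarrow> 'v) \<Rightarrow>
   ('f \<Rightarrow> 'w::ab_group_add \<Rightarrow> 'w) \<Rightarrow> (int \<Rightarrow> 'w set) \<Rightarrow> (nat \<Rightarrow> 'w list \<Rightarrow> 'w) \<Rightarrow>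
   (nat \<Rightarrow> 'v list \<Rightarrow> 'w) \<Rightarrow> bool" where
  "ainf_hom sA GA mA sB GB mB f \<longleftrightarrow>
     (\<forall>n\<ge>1. graded_multilinear sA GA sB GB n (1 - int n) (f n)) \<and>
     (\<forall>n\<ge>1. \<forall>xs ds. length xs = n \<longrightarrow> homog GA xs ds \<longrightarrow>
        ainf_lhs_term sA f sB mA xs ds = hom_rhs sB mB f xs ds)"

text \<open>f_1 induces an isomorphism H(A, m1) \<rightarrow> H(B, m1), spelled out:
  induced map on cohomology is surjective and injective (well-definedness follows
  from f_1 being a chain map, a consequence of the homomorphism identity for n = 1).\<close>
definition quasi_iso ::
  "(nat \<Rightarrow> 'v list \<Rightarrow> 'v) \<Rightarrow> (nat \<Rightarrow> 'w::ab_group_add list \<Rightarrow> 'w) \<Rightarrow>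
   (nat \<Rightarrow> 'v::ab_group_add list \<Rightarrow> 'w) \<Rightarrow> bool" where
  "quasi_iso mA mB f \<longleftrightarrow>
     (\<forall>z. mB 1 [z] = 0 \<longrightarrow> (\<exists>z'. mA 1 [z'] = 0 \<and> (\<exists>u. f 1 [z'] - z = mB 1 [u]))) \<and>
     (\<forall>z. mA 1 [z] = 0 \<longrightarrow> (\<exists>u. f 1 [z] = mB 1 [u]) \<longrightarrow> (\<exists>v. z = mA 1 [v]))"

end

theory Submission
  imports Defs
begin

text \<open>Let \<phi> rescale the homogeneous component of degree k by w k = \<lambda>^(-(a+b) k + 2a + b).
  Since m_n has degree 2 - n, for homogeneous x_1, ..., x_n of total degree D both
  \<phi>(m~_n(x_1, ..., x_n)) and m_n(\<phi> x_1, ..., \<phi> x_n) equal \<lambda>^(-(a+b) D + n(2a+b)) m_n(x_1, ..., x_n).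
  So \<phi> is a strict morphism (A, m~) \<rightarrow> (A, m), i.e. an A-infinity morphism with f_1 = \<phi> and
  f_n = 0 for n \<ge> 2, and as a bijective chain map it induces an isomorphism on cohomology.\<close>

lemma ksign_0 [simp]: "ksign 0 = 1"
  by (simp add: ksign_def)

lemma power_int_sum:
  fixes x :: "'a::field"
  assumes "x \<noteq> 0"
  shows "x powi (\<Sum>i\<in>S. e i) = (\<Prod>i\<in>S. x powi e i)"
  by (induction S rule: infinite_finite_induct) (simp_all add: power_int_add assms)

lemma graded_multilinear_linear_arg:
  assumes "graded_multilinear sA GA sB GB n d g" "length xs = n" "i < n"
  shows "Vector_Spaces.linear sA sB (\<lambda>y. g (xs[i := y]))"
  using assms unfolding graded_multilinear_def by blast

lemma graded_multilinear_zero_arg: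
  assumes "graded_multilinear sA GA sB GB n d g" "length xs = n" "i < n" "xs ! i = 0"
  shows "g xs = 0"
proof -
  have "g xs = (\<lambda>y. g (xs[i := y])) 0"
    using assms(4) by (metis list_update_id)
  also have "\<dots> = 0"
    using graded_multilinear_linear_arg[OF assms(1-3)]
      module_hom.zero[of sA sB "\<lambda>y. g (xs[i := y])"]
    by (simp add: linear_iff_module_hom)
  finally show ?thesis .
qed

lemma graded_multilinear_scale_args:
  assumes "vector_space sB" "graded_multilinear sA GA sB GB n d g" "length xs = n"
  shows "g (map (\<lambda>i. sA (c i) (xs ! i)) [0..<n]) = sB (\<Prod>i<n. c i) (g xs)"
proof -
  interpret B: vector_space sB by (fact assms(1))
  define L where "L k = map (\<lambda>i. if i < k then sA (c i) (xs ! i) else xs ! i) [0..<n]" for k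
  have "g (L k) = sB (\<Prod>i<k. c i) (g xs)" if "k \<le> n" for k
    using that
  proof (induction k)
    case 0
    have "L 0 = xs"
      unfolding L_def using map_nth[of xs] by (simp add: assms(3)[symmetric])
    then show ?case by simp
  next
    case (Suc k)
    have step: "L (Suc k) = (L k)[k := sA (c k) (xs ! k)]" "L k = (L k)[k := xs ! k]"
      unfolding L_def using Suc.prems by (auto intro!: nth_equalityI simp: nth_list_update)
    have "Vector_Spaces.linear sA sB (\<lambda>y. g ((L k)[k := y]))"
      using Suc.prems by (intro graded_multilinear_linear_arg[OF assms(2)]) (simp_all add: L_def)
    then have "g (L (Suc k)) = sB (c k) (g (L k))"
      using step by (metis linear_iff_module_hom module_hom.scale)
    then show ?case
      using Suc by (simp add: mult.commute)
  qed
  moreover have "L n = map (\<lambda>i. sA (c i) (xs ! i)) [0..<n]"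
    unfolding L_def by simp
  ultimately show ?thesis by (metis order_refl)
qed

locale graded_vector_space =
  fixes scale :: "'f::field \<Rightarrow> 'v::ab_group_add \<Rightarrow> 'v" and Gr :: "int \<Rightarrow> 'v set"
  assumes graded: "graded_vs scale Gr"
begin

lemma vector_space: "vector_space scale"
  using graded by (simp add: graded_vs_def)

sublocale vector_space scale
  by (fact vector_space)

lemma subspace_Gr: "subspace (Gr k)"
  using graded by (simp add: graded_vs_def)

lemma zero_in_Gr: "0 \<in> Gr k"
  using subspace_Gr subspace_0 by blast

lemma scale_in_Gr: "x \<in> Gr k \<Longrightarrow> scale c x \<in> Gr k"
  using subspace_Gr subspace_scale by blast

definition decomposition :: "'v \<Rightarrow> (int \<Rightarrow> 'v) \<Rightarrow> bool" where
  "decomposition v c \<longleftrightarrow>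
     finite {k. c k \<noteq> 0} \<and> (\<forall>k. c k \<in> Gr k) \<and> v = (\<Sum>k | c k \<noteq> 0. c k)"

definition homogeneous_part :: "'v \<Rightarrow> int \<Rightarrow> 'v" where
  "homogeneous_part v = (THE c. decomposition v c)"

lemma ex1_decomposition: "\<exists>!c. decomposition v c"
  using graded unfolding graded_vs_def decomposition_def by blast

lemma decomposition_homogeneous_part: "decomposition v (homogeneous_part v)"
  unfolding homogeneous_part_def using ex1_decomposition by (rule theI')

lemma homogeneous_part_eqI: "decomposition v c \<Longrightarrow> homogeneous_part v = c"
  unfolding homogeneous_part_def using ex1_decomposition by (rule the1_equality)

lemma decompositionI:
  assumes "finite S" "{k. c k \<noteq> 0} \<subseteq> S" "\<And>k. c k \<in> Gr k" "v = (\<Sum>k\<in>S. c k)"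
  shows "decomposition v c"
proof -
  have "(\<Sum>k\<in>S. c k) = (\<Sum>k | c k \<noteq> 0. c k)"
    using assms(1,2) by (intro sum.mono_neutral_right) auto
  then show ?thesis
    using assms finite_subset unfolding decomposition_def by auto
qed

lemma finite_homogeneous_part_support: "finite {k. homogeneous_part v k \<noteq> 0}"
  using decomposition_homogeneous_part unfolding decomposition_def by blast

lemma homogeneous_part_in_Gr: "homogeneous_part v k \<in> Gr k"
  using decomposition_homogeneous_part unfolding decomposition_def by blast

lemma sum_homogeneous_part:
  assumes "finite S" "{k. homogeneous_part v k \<noteq> 0} \<subseteq> S"
  shows "(\<Sum>k\<in>S. homogeneous_part v k) = v"
proof -
  have "(\<Sum>k\<in>S. homogeneous_part v k)
      = (\<Sum>k | homogeneous_part v k \<noteq> 0. homogeneous_part v k)"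
    using assms by (intro sum.mono_neutral_right) auto
  then show ?thesis
    using decomposition_homogeneous_part unfolding decomposition_def by auto
qed

lemma homogeneous_part_add:
  "homogeneous_part (x + y) k = homogeneous_part x k + homogeneous_part y k"
proof -
  let ?S = "{k. homogeneous_part x k \<noteq> 0} \<union> {k. homogeneous_part y k \<noteq> 0}"
  have "decomposition (x + y) (\<lambda>k. homogeneous_part x k + homogeneous_part y k)"
  proof (rule decompositionI)
    show "finite ?S" using finite_homogeneous_part_support by blast
    show "x + y = (\<Sum>k\<in>?S. homogeneous_part x k + homogeneous_part y k)"
      using sum_homogeneous_part[of ?S x] sum_homogeneous_part[of ?S y] finite_homogeneous_part_support
      by (simp add: sum.distrib)
  qed (auto intro: homogeneous_part_in_Gr subspace_add[OF subspace_Gr])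
  then show ?thesis by (simp add: homogeneous_part_eqI)
qed

lemma homogeneous_part_scale: "homogeneous_part (scale r x) k = scale r (homogeneous_part x k)"
proof -
  let ?S = "{k. homogeneous_part x k \<noteq> 0}"
  have "decomposition (scale r x) (\<lambda>k. scale r (homogeneous_part x k))"
  proof (rule decompositionI)
    show "scale r x = (\<Sum>k\<in>?S. scale r (homogeneous_part x k))"
      using sum_homogeneous_part[of ?S x] finite_homogeneous_part_support
      by (metis order_refl scale_sum_right)
  qed (auto intro: finite_homogeneous_part_support homogeneous_part_in_Gr scale_in_Gr)
  then show ?thesis by (simp add: homogeneous_part_eqI)
qed

lemma homogeneous_part_homogeneous:
  "y \<in> Gr k \<Longrightarrow> homogeneous_part y = (\<lambda>j. if j = k then y else 0)"
  by (rule homogeneous_part_eqI, rule decompositionI[where S = "{k}"]) (auto simp: zero_in_Gr)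

lemma linear_eq_on_homogeneous:
  assumes "Vector_Spaces.linear scale s g" "Vector_Spaces.linear scale s h"
    and "\<And>k y. y \<in> Gr k \<Longrightarrow> g y = h y"
  shows "g v = h v"
proof -
  let ?S = "{k. homogeneous_part v k \<noteq> 0}"
  have "g v = (\<Sum>k\<in>?S. g (homogeneous_part v k))"
    using sum_homogeneous_part[OF finite_homogeneous_part_support order_refl, of v] assms(1)
    by (metis linear_iff_module_hom module_hom.sum)
  also have "\<dots> = (\<Sum>k\<in>?S. h (homogeneous_part v k))"
    by (intro sum.cong refl) (blast intro: assms(3) homogeneous_part_in_Gr)
  also have "\<dots> = h v"
    using sum_homogeneous_part[OF finite_homogeneous_part_support order_refl, of v] assms(2)
    by (metis linear_iff_module_hom module_hom.sum)
  finally show ?thesis .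
qed

definition grading_scale :: "(int \<Rightarrow> 'f) \<Rightarrow> 'v \<Rightarrow> 'v" where
  "grading_scale e v = (\<Sum>k | homogeneous_part v k \<noteq> 0. scale (e k) (homogeneous_part v k))"

lemma grading_scale_superset:
  assumes "finite S" "{k. homogeneous_part v k \<noteq> 0} \<subseteq> S"
  shows "grading_scale e v = (\<Sum>k\<in>S. scale (e k) (homogeneous_part v k))"
  unfolding grading_scale_def using assms by (intro sum.mono_neutral_left) auto

lemma grading_scale_homogeneous: "y \<in> Gr k \<Longrightarrow> grading_scale e y = scale (e k) y"
  by (subst grading_scale_superset[where S = "{k}"]) (auto simp: homogeneous_part_homogeneous)

lemma linear_grading_scale: "Vector_Spaces.linear scale scale (grading_scale e)"
proof -
  have "grading_scale e (x + y) = grading_scale e x + grading_scale e y" for x y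
  proof -
    let ?S = "{k. homogeneous_part x k \<noteq> 0} \<union> {k. homogeneous_part y k \<noteq> 0}"
    have fin: "finite ?S" using finite_homogeneous_part_support by blast
    have "grading_scale e (x + y) = (\<Sum>k\<in>?S. scale (e k) (homogeneous_part (x + y) k))"
      using fin by (intro grading_scale_superset) (auto simp: homogeneous_part_add)
    also have "\<dots> = grading_scale e x + grading_scale e y"
      using grading_scale_superset[OF fin, of x] grading_scale_superset[OF fin, of y]
      by (simp add: homogeneous_part_add scale_right_distrib sum.distrib)
    finally show ?thesis .
  qed
  moreover have "grading_scale e (scale r x) = scale r (grading_scale e x)" for r x
  proof -
    have "grading_scale e (scale r x)
        = (\<Sum>k | homogeneous_part x k \<noteq> 0. scale (e k) (homogeneous_part (scale r x) k))"
      using finite_homogeneous_part_support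
      by (intro grading_scale_superset) (auto simp: homogeneous_part_scale)
    then show ?thesis
      by (simp add: homogeneous_part_scale grading_scale_def scale_sum_right mult.commute)
  qed
  ultimately show ?thesis
    by (simp add: Vector_Spaces.linear_iff vector_space)
qed

lemma grading_scale_inverse:
  assumes "\<And>k. e k * e' k = 1"
  shows "grading_scale e (grading_scale e' v) = v"
proof (rule linear_eq_on_homogeneous[where h = "\<lambda>v. v"])
  show "Vector_Spaces.linear scale scale (\<lambda>v. grading_scale e (grading_scale e' v))"
    using Vector_Spaces.linear_compose[OF linear_grading_scale linear_grading_scale]
    by (simp add: comp_def)
  show "Vector_Spaces.linear scale scale (\<lambda>v. v)"
    by (fact linear_ident)
  show "grading_scale e (grading_scale e' y) = y" if "y \<in> Gr k" for k y
    using that assms grading_scale_homogeneous[OF that]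
      grading_scale_homogeneous[OF scale_in_Gr[OF that]]
    by simp
qed

lemma bij_grading_scale:
  assumes "\<And>k. e k \<noteq> 0"
  shows "bij (grading_scale e)"
  by (rule o_bij[where g = "grading_scale (\<lambda>k. inverse (e k))"])
     (simp_all add: fun_eq_iff grading_scale_inverse assms)

lemma grading_scale_multilinear:
  assumes "graded_multilinear scale Gr scale Gr n d g" "homog Gr xs ds" "length xs = n"
  shows "g (map (grading_scale e) xs) = scale (\<Prod>i<n. e (ds ! i)) (g xs)"
proof -
  have "map (grading_scale e) xs = map (\<lambda>i. scale (e (ds ! i)) (xs ! i)) [0..<n]"
    using assms(2,3) unfolding homog_def
    by (intro nth_equalityI) (auto intro!: grading_scale_homogeneous)
  then show ?thesis
    using graded_multilinear_scale_args[OF vector_space assms(1,3)] by simp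
qed

text \<open>The weight \<open>-(a+b) k + 2a + b\<close> is the affine function \<open>\<alpha> k + \<beta>\<close> of the degree
  solving \<open>\<alpha> (D + 2 - n) + \<beta> + a n + b = \<alpha> D + n \<beta>\<close> for all \<open>D\<close> and \<open>n\<close>.\<close>

lemma grading_scale_rescaled_operation:
  fixes lam :: 'f and a b :: int
  defines "w \<equiv> \<lambda>k. lam powi (- (a + b) * k + (2 * a + b))"
  assumes "lam \<noteq> 0" "graded_multilinear scale Gr scale Gr n (2 - int n) g"
    and "homog Gr xs ds" "length xs = n"
  shows "grading_scale w (scale (lam powi (a * int n + b)) (g xs)) = g (map (grading_scale w) xs)"
proof -
  let ?D = "sum_list ds"
  have g_degree: "g xs \<in> Gr (?D + (2 - int n))"
    using assms(3-5) unfolding graded_multilinear_def by blast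
  have "grading_scale w (scale (lam powi (a * int n + b)) (g xs))
      = scale (lam powi (- (a + b) * (?D + (2 - int n)) + (2 * a + b) + (a * int n + b))) (g xs)"
    unfolding grading_scale_homogeneous[OF scale_in_Gr[OF g_degree]] w_def scale_scale
      power_int_add[OF disjI1[OF assms(2)]] by (rule refl)
  also have "- (a + b) * (?D + (2 - int n)) + (2 * a + b) + (a * int n + b)
      = - (a + b) * ?D + int n * (2 * a + b)"
    by (simp add: algebra_simps)
  also have "\<dots> = (\<Sum>i<n. - (a + b) * ds ! i + (2 * a + b))"
    using assms(4,5) unfolding homog_def
    by (simp add: sum.distrib sum_distrib_left[symmetric] sum_list_sum_nth atLeast0LessThan)
  also have "lam powi \<dots> = (\<Prod>i<n. w (ds ! i))"
    using assms(2) by (simp add: w_def power_int_sum)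
  also have "scale \<dots> (g xs) = g (map (grading_scale w) xs)"
    using grading_scale_multilinear[OF assms(3-5)] by simp
  finally show ?thesis .
qed

lemma grading_scale_rescaled_unary:
  fixes lam :: 'f and a b :: int
  defines "w \<equiv> \<lambda>k. lam powi (- (a + b) * k + (2 * a + b))"
  assumes "lam \<noteq> 0" "graded_multilinear scale Gr scale Gr 1 1 g"
  shows "grading_scale w (scale (lam powi (a + b)) (g [x])) = g [grading_scale w x]"
proof (rule linear_eq_on_homogeneous
    [where g = "\<lambda>x. grading_scale w (scale (lam powi (a + b)) (g [x]))"])
  have "Vector_Spaces.linear scale scale (\<lambda>x. g [x])"
    using graded_multilinear_linear_arg[OF assms(3), of "[0]" 0] by simp
  then show "Vector_Spaces.linear scale scale
      (\<lambda>x. grading_scale w (scale (lam powi (a + b)) (g [x])))"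
    and "Vector_Spaces.linear scale scale (\<lambda>x. g [grading_scale w x])"
    using linear_grading_scale[of w]
    by (auto simp: Vector_Spaces.linear_iff scale_right_distrib scale_left_commute)
  show "grading_scale w (scale (lam powi (a + b)) (g [y])) = g [grading_scale w y]"
    if "y \<in> Gr k" for k y
    using grading_scale_rescaled_operation[OF assms(2), of 1 g "[y]" "[k]"] assms(3) that
    by (simp add: w_def homog_def)
qed

end

definition strict_ainf_hom :: "('v \<Rightarrow> 'w::zero) \<Rightarrow> nat \<Rightarrow> 'v list \<Rightarrow> 'w" where
  "strict_ainf_hom f k xs = (if k = 1 then f (hd xs) else 0)"

lemma length_blocks [simp]: "length (blocks cs xs) = length cs"
  by (induction cs arbitrary: xs) auto

lemma blocks_replicate_1:
  "map2 F (replicate (length xs) 1) (blocks (replicate (length xs) 1) xs)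
    = map (\<lambda>x. F 1 [x]) xs"
  by (induction xs) (auto simp: take_Suc_conv_app_nth)

lemma length_le_sum_list: "\<forall>c\<in>set cs. (1::nat) \<le> c \<Longrightarrow> length cs \<le> sum_list cs"
  by (induction cs) auto

lemma finite_compositions: "finite (compositions n)"
proof -
  have "compositions n \<subseteq> {xs. set xs \<subseteq> {0..n} \<and> length xs \<le> n}"
    unfolding compositions_def using length_le_sum_list member_le_sum_list by fastforce
  then show ?thesis
    using finite_lists_length_le[of "{0..n}" n] finite_subset by blast
qed

lemma compositions_all_1:
  assumes "cs \<in> compositions n" "\<forall>i<length cs. cs ! i = 1"
  shows "cs = replicate n 1"
proof -
  have cs: "cs = replicate (length cs) 1"
    using assms(2) by (simp add: list_eq_iff_nth_eq)
  have "sum_list cs = n"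
    using assms(1) unfolding compositions_def by blast
  then have "length cs = n"
    by (subst (asm) cs) (simp add: sum_list_replicate)
  then show ?thesis
    using cs by simp
qed

lemma ainf_lhs_term_strict_ainf_hom:
  assumes "vector_space sB" "length xs = n" "n \<ge> 1"
  shows "ainf_lhs_term sA (strict_ainf_hom f) sB mA xs ds = f (mA n xs)"
proof -
  interpret B: vector_space sB by (fact assms(1))
  \<comment> \<open>only \<open>r = 0, s = n\<close> gives a term with \<open>r + 1 + t = 1\<close>\<close>
  have "ainf_lhs_term sA (strict_ainf_hom f) sB mA xs ds =
      (\<Sum>r\<in>{0..n}. \<Sum>s\<in>{1..n - r}. if r = 0 then if s = n then f (mA n xs) else 0 else 0)"
    unfolding ainf_lhs_term_def Let_def assms(2)
    using assms(2) by (intro sum.cong refl) (auto simp: strict_ainf_hom_def)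
  also have "\<dots> = (\<Sum>r\<in>{0..n}. if r = 0 then f (mA n xs) else 0)"
    using assms(3) by (intro sum.cong refl) (auto simp: sum.delta)
  also have "\<dots> = f (mA n xs)"
    by (simp add: sum.delta)
  finally show ?thesis .
qed

lemma hom_rhs_strict_ainf_hom:
  assumes "vector_space sB" "\<forall>k\<ge>1. graded_multilinear sB GB sB GB k (2 - int k) (mB k)"
    and "length xs = n" "n \<ge> 1"
  shows "hom_rhs sB mB (strict_ainf_hom f) xs ds = mB n (map f xs)"
proof -
  interpret B: vector_space sB by (fact assms(1))
  let ?F = "strict_ainf_hom f" and ?r = "replicate n (1::nat)"
  have r: "?r \<in> compositions n"
    using assms(4) unfolding compositions_def by (auto simp: sum_list_replicate)
  have "mB (length cs) (map2 ?F cs (blocks cs xs)) = 0" if "cs \<in> compositions n - {?r}" for cs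
  proof -
    have "\<not> (\<forall>i<length cs. cs ! i = 1)"
      using that compositions_all_1 by blast
    then obtain i where i: "i < length cs" "cs ! i \<noteq> 1"
      by blast
    have "cs \<noteq> []" using that unfolding compositions_def by blast
    then show ?thesis
      using i by (intro graded_multilinear_zero_arg[OF assms(2)[rule_format], of _ _ i])
        (auto simp: strict_ainf_hom_def)
  qed
  then have "hom_rhs sB mB ?F xs ds =
      sB (ksign (hom_sigma ?r) * ksign (hom_koszul ?r ds)) (mB n (map2 ?F ?r (blocks ?r xs)))"
    unfolding hom_rhs_def assms(3)
    by (subst sum.remove[OF finite_compositions r]) (simp add: sum.neutral)
  also have "\<dots> = mB n (map f xs)"
    using blocks_replicate_1[of ?F xs] assms(3)
    by (simp add: hom_sigma_def hom_koszul_def strict_ainf_hom_def)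
  finally show ?thesis .
qed

lemma ainf_hom_strict_ainf_hom:
  assumes target: "ainf_algebra sB GB mB"
    and f_linear: "Vector_Spaces.linear sA sB f"
    and f_degree: "\<And>k x. x \<in> GA k \<Longrightarrow> f x \<in> GB k"
    and f_commutes: "\<And>n xs ds. n \<ge> 1 \<Longrightarrow> length xs = n \<Longrightarrow> homog GA xs ds \<Longrightarrow>
                       f (mA n xs) = mB n (map f xs)"
  shows "ainf_hom sA GA mA sB GB mB (strict_ainf_hom f)"
proof -
  interpret B: graded_vector_space sB GB
    using target by unfold_locales (simp add: ainf_algebra_def)
  have mB: "\<forall>k\<ge>1. graded_multilinear sB GB sB GB k (2 - int k) (mB k)"
    using target by (simp add: ainf_algebra_def)
  have "graded_multilinear sA GA sB GB n (1 - int n) (strict_ainf_hom f n)" for n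
  proof (cases "n = 1")
    case True
    have "(\<lambda>y. strict_ainf_hom f n (xs[i := y])) = f" if "length xs = n" "i < n" for xs i
      using that True by (cases xs) (auto simp: strict_ainf_hom_def)
    moreover have "strict_ainf_hom f n xs \<in> GB (sum_list ds + (1 - int n))"
      if "homog GA xs ds" "length xs = n" for xs ds
      using that True f_degree by (cases xs; cases ds) (auto simp: homog_def strict_ainf_hom_def)
    ultimately show ?thesis
      unfolding graded_multilinear_def using f_linear by simp
  next
    case False
    have "vector_space_pair sA sB"
      using f_linear by (simp add: Vector_Spaces.linear_iff vector_space_pair_def)
    then have "Vector_Spaces.linear sA sB (\<lambda>_. 0)"
      by (rule vector_space_pair.linear_zero)
    then show ?thesis
      using False by (simp add: graded_multilinear_def strict_ainf_hom_def B.zero_in_Gr)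
  qed
  moreover have
    "ainf_lhs_term sA (strict_ainf_hom f) sB mA xs ds = hom_rhs sB mB (strict_ainf_hom f) xs ds"
    if "n \<ge> 1" "length xs = n" "homog GA xs ds" for n xs ds
  proof -
    have "ainf_lhs_term sA (strict_ainf_hom f) sB mA xs ds = f (mA n xs)"
      using that ainf_lhs_term_strict_ainf_hom[OF B.vector_space] by simp
    also have "\<dots> = mB n (map f xs)"
      using f_commutes that .
    also have "\<dots> = hom_rhs sB mB (strict_ainf_hom f) xs ds"
      using hom_rhs_strict_ainf_hom[OF B.vector_space mB that(2,1)] by simp
    finally show ?thesis .
  qed
  ultimately show ?thesis
    unfolding ainf_hom_def by blast
qed

lemma quasi_iso_strict_ainf_hom:
  assumes "bij f" "f 0 = 0" "\<And>x. f (mA 1 [x]) = mB 1 [f x]"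
  shows "quasi_iso mA mB (strict_ainf_hom f)"
proof -
  have f_inv: "f (inv f y) = y" for y
    using assms(1) by (simp add: bij_is_surj surj_f_inv_f)
  have f_eq: "f x = f y \<Longrightarrow> x = y" for x y
    using assms(1) by (simp add: bij_is_inj inj_eq)
  have cocycle_preimage: "mA 1 [inv f z] = 0" if "mB 1 [z] = 0" for z
  proof (rule f_eq)
    show "f (mA 1 [inv f z]) = f 0"
      using that assms(2,3) f_inv by simp
  qed
  have coboundary_preimage: "z = mA 1 [inv f u]" if "f z = mB 1 [u]" for z u
  proof (rule f_eq)
    show "f z = f (mA 1 [inv f u])"
      using that assms(3) f_inv by simp
  qed
  have "\<exists>z'. mA 1 [z'] = 0 \<and> (\<exists>u. f z' - z = mB 1 [u])" if "mB 1 [z] = 0" for z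
    using cocycle_preimage[OF that] that f_inv
    by (intro exI[of _ "inv f z"] conjI exI[of _ z]) simp_all
  moreover have "\<exists>v. z = mA 1 [v]" if "f z = mB 1 [u]" for z u
    using coboundary_preimage[OF that] by blast
  ultimately show ?thesis
    unfolding quasi_iso_def strict_ainf_hom_def by auto
qed

theorem corollary2p3:
  fixes scale :: "'f::field \<Rightarrow> 'v::ab_group_add \<Rightarrow> 'v"
    and Gr :: "int \<Rightarrow> 'v set"
    and m :: "nat \<Rightarrow> 'v list \<Rightarrow> 'v"
    and lam :: 'f and a b :: int
  assumes "ainf_algebra scale Gr m"
    and "lam \<noteq> 0"
  shows "\<exists>f. ainf_hom scale Gr (\<lambda>k xs. scale (lam powi (a * int k + b)) (m k xs))
                     scale Gr m f
          \<and> quasi_iso (\<lambda>k xs. scale (lam powi (a * int k + b)) (m k xs)) m f"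
proof -
  interpret graded_vector_space scale Gr
    using assms(1) by unfold_locales (simp add: ainf_algebra_def)
  define w where "w = (\<lambda>k. lam powi (- (a + b) * k + (2 * a + b)))"
  let ?mt = "\<lambda>k xs. scale (lam powi (a * int k + b)) (m k xs)"
  have m_multilinear: "graded_multilinear scale Gr scale Gr n (2 - int n) (m n)" if "n \<ge> 1" for n
    using assms(1) that by (simp add: ainf_algebra_def)
  have "ainf_hom scale Gr ?mt scale Gr m (strict_ainf_hom (grading_scale w))"
  proof (rule ainf_hom_strict_ainf_hom[OF assms(1) linear_grading_scale])
    show "grading_scale w x \<in> Gr k" if "x \<in> Gr k" for k x
      using that by (simp add: grading_scale_homogeneous scale_in_Gr)
    show "grading_scale w (?mt n xs) = m n (map (grading_scale w) xs)"
      if "n \<ge> 1" "length xs = n" "homog Gr xs ds" for n xs ds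
      unfolding w_def using grading_scale_rescaled_operation[OF assms(2) m_multilinear] that by blast
  qed
  moreover have "quasi_iso ?mt m (strict_ainf_hom (grading_scale w))"
  proof (rule quasi_iso_strict_ainf_hom)
    show "bij (grading_scale w)"
      using assms(2) by (intro bij_grading_scale) (simp add: w_def)
    show "grading_scale w 0 = 0"
      using grading_scale_homogeneous[OF zero_in_Gr[of 0]] by simp
    show "grading_scale w (?mt 1 [x]) = m 1 [grading_scale w x]" for x
      using grading_scale_rescaled_unary[OF assms(2), where g = "m 1"] m_multilinear[of 1]
      unfolding w_def by simp
  qed
  ultimately show ?thesis by blast
qed

end
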